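(* Let $(X,\rho,\mu)$ be a $K$-doubling metric measure space, $(M,d)$ a complete metric space, $\mathcal D$ an approximate $X$-distribution for $M$, $A\subseteq X$ nonempty and $f\colon A\to M$ an arbitrary function that is approximately $\mathcal D$-differentiable at some $x\in A$. Then $x\in A_f^\mu$ and $\operatorname{Lip}^\mu f(x)\le|[F]|_{x,f(x)}$ for every approximate $\mathcal D$-differential $[F]\in\mathcal D_{x,f(x)}$ of $f$ at $x$. If in addition $A$ is a $\mu$-neighborhood of $x$, then the approximate $\mathcal D$-differential $df_x$ of $f$ at $x$ is unique and $\operatorname{Lip}^\mu f(x)=|df_x|_{x,f(x)}$.
   Context: A $K$-doubling metric measure space ($K>0$) is a triple $(X,\rho,\mu)$ where $(X,\rho)$ is a complete separable metric space and $\mu$ is a Borel-regular outer measure on $X$ with $0<\mu(B_{2r}(x))\le K\mu(B_r(x))<+\infty$ for all $x\in X$, $r>0$. A set $E\ni x$ is a $\mu$-neighborhood of $x$ if there is a Borel set $B\subseteq E$ with $\lim_{r\to0^+}\mu(B_r(x)\setminus B)/\mu(B_r(x))=0$; these sets define the $\mu$-topology on $X$. A point $x$ is a $\mu$-accumulation point of $A$ if $A\cap U\setminus\{x\}\ne\emptyset$ for every $\mu$-neighborhood $U$ of $x$; for such $x$ and $g\colon A\to\mathbb R$, $\mu\text{-}\lim_{y\in A,y\to x}g(y)=z$ means that for every $\varepsilon>0$ there is a $\mu$-neighborhood $U$ of $x$ with $|g(y)-z|<\varepsilon$ for all $y\in A\cap U\setminus\{x\}$, and $\mu\text{-}\limsup_{y\in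 A,y\to x}g(y)=\inf_U\sup_{y\in U\cap A\setminus\{x\}}g(y)$ (infimum over $\mu$-neighborhoods $U$ of $x$). For $x\in X$, $P\in M$, let $\mathcal C^\mu_{x,P}$ be the set of equivalence classes $[F]$ of Lipschitz maps $F\colon B\to M$ defined on a $\mu$-neighborhood $B$ of $x$ with $F(x)=P$, modulo $F\sim G\iff\mu\text{-}\lim_{y\to x}d(F(y),G(y))/\rho(y,x)=0$; set $|[F]|_{x,P}=\limsup_{y\to x}d(F(y),P)/\rho(y,x)$. An approximate $X$-distribution for $M$ is any subset $\mathcal D\subseteq\bigsqcup_{(x,P)}\mathcal C^\mu_{x,P}$, with $\mathcal D_{x,P}=\mathcal D\cap\mathcal C^\mu_{x,P}$. For $f\colon A\to M$ and a $\mu$-accumulation point $x\in A$ of $A$, $f$ is approximately $\mathcal D$-differentiable at $x$ if there is $[F]\in\mathcal D_{x,f(x)}$ with $\mu\text{-}\lim_{y\in A,y\to x}d(f(y),F(y))/\rho(y,x)=0$; such $[F]$ is an approximate $\mathcal D$-differential. Finally $\operatorname{Lip}^\mu f(x)=\mu\text{-}\limsup_{y\in A,y\to x}d(f(y),f(x))/\rho(y,x)$ and $A_f^\mu$ is the set of $\mu$-accumulation points $x\in A$ of $A$ with $\operatorname{Lip}^\mu f(x)<+\infty$. *)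

theory Defs
  imports "HOL-Analysis.Analysis"
begin

definition doubling_mms :: "real \<Rightarrow> ('a::metric_space) measure \<Rightarrow> bool" where
  "doubling_mms K \<mu> \<longleftrightarrow> K > 0 \<and> sets \<mu> = sets borel \<and>
     (\<forall>x r. r > 0 \<longrightarrow> 0 < emeasure \<mu> (ball x r)
        \<and> emeasure \<mu> (ball x (2*r)) \<le> ennreal K * emeasure \<mu> (ball x r)
        \<and> emeasure \<mu> (ball x r) < \<infinity>)"

definition mu_nbhd :: "('a::metric_space) measure \<Rightarrow> 'a \<Rightarrow> 'a set \<Rightarrow> bool" where
  "mu_nbhd \<mu> x E \<longleftrightarrow> x \<in> E \<and> (\<exists>B. B \<in> sets borel \<and> B \<subseteq> E \<and>
     ((\<lambda>r. measure \<mu> (ball x r - B) / measure \<mu> (ball x r)) \<longlongrightarrow> 0) (at_right 0))"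

definition mu_acc :: "('a::metric_space) measure \<Rightarrow> 'a set \<Rightarrow> 'a \<Rightarrow> bool" where
  "mu_acc \<mu> A x \<longleftrightarrow> (\<forall>U. mu_nbhd \<mu> x U \<longrightarrow> A \<inter> U - {x} \<noteq> {})"

definition mu_lim :: "('a::metric_space) measure \<Rightarrow> 'a set \<Rightarrow> ('a \<Rightarrow> real) \<Rightarrow> 'a \<Rightarrow> real \<Rightarrow> bool" where
  "mu_lim \<mu> A g x z \<longleftrightarrow> (\<forall>\<epsilon>>0. \<exists>U. mu_nbhd \<mu> x U \<and> (\<forall>y\<in>A \<inter> U - {x}. \<bar>g y - z\<bar> < \<epsilon>))"

definition mu_limsup :: "('a::metric_space) measure \<Rightarrow> 'a set \<Rightarrow> ('a \<Rightarrow> real) \<Rightarrow> 'a \<Rightarrow> ereal" where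
  "mu_limsup \<mu> A g x = (INF U\<in>{U. mu_nbhd \<mu> x U}. SUP y\<in>U \<inter> A - {x}. ereal (g y))"

text \<open>A germ representative: a pair (B, F) with F a Lipschitz map on the domain B
  (values of F outside B are irrelevant).\<close>
type_synonym ('a, 'b) germ_rep = "'a set \<times> ('a \<Rightarrow> 'b)"

definition lip_rep :: "('a::metric_space) measure \<Rightarrow> 'a \<Rightarrow> 'b::metric_space \<Rightarrow> ('a, 'b) germ_rep \<Rightarrow> bool" where
  "lip_rep \<mu> x P p \<longleftrightarrow> mu_nbhd \<mu> x (fst p) \<and> (\<exists>L. L-lipschitz_on (fst p) (snd p)) \<and> snd p x = P"

definition germ_equiv :: "('a::metric_space) measure \<Rightarrow> 'a \<Rightarrow> ('a, 'b::metric_space) germ_rep \<Rightarrow> ('a, 'b) germ_rep \<Rightarrow> bool" where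
  "germ_equiv \<mu> x p q \<longleftrightarrow>
     mu_lim \<mu> (fst p \<inter> fst q) (\<lambda>y. dist (snd p y) (snd q y) / dist y x) x 0"

definition germ_classes :: "('a::metric_space) measure \<Rightarrow> 'a \<Rightarrow> 'b::metric_space \<Rightarrow> ('a, 'b) germ_rep set set" where
  "germ_classes \<mu> x P = {c. \<exists>p. lip_rep \<mu> x P p \<and> c = {q. lip_rep \<mu> x P q \<and> germ_equiv \<mu> x p q}}"

definition rep_norm :: "'a::metric_space \<Rightarrow> 'b::metric_space \<Rightarrow> ('a, 'b) germ_rep \<Rightarrow> ereal" where
  "rep_norm x P p = Limsup (at x within fst p) (\<lambda>y. ereal (dist (snd p y) P / dist y x))"

definition germ_norm :: "'a::metric_space \<Rightarrow> 'b::metric_space \<Rightarrow> ('a, 'b) germ_rep set \<Rightarrow> ereal" where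
  "germ_norm x P c = rep_norm x P (SOME p. p \<in> c)"

definition approx_distribution :: "('a::metric_space) measure \<Rightarrow> ('a \<Rightarrow> 'b::metric_space \<Rightarrow> ('a, 'b) germ_rep set set) \<Rightarrow> bool" where
  "approx_distribution \<mu> D \<longleftrightarrow> (\<forall>x P. D x P \<subseteq> germ_classes \<mu> x P)"

definition approx_differential :: "('a::metric_space) measure \<Rightarrow> ('a \<Rightarrow> 'b::metric_space \<Rightarrow> ('a, 'b) germ_rep set set)
    \<Rightarrow> 'a set \<Rightarrow> ('a \<Rightarrow> 'b) \<Rightarrow> 'a \<Rightarrow> ('a, 'b) germ_rep set \<Rightarrow> bool" where
  "approx_differential \<mu> D A f x c \<longleftrightarrow> x \<in> A \<and> mu_acc \<mu> A x \<and> c \<in> D x (f x) \<and>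
     (\<exists>p\<in>c. mu_lim \<mu> (A \<inter> fst p) (\<lambda>y. dist (f y) (snd p y) / dist y x) x 0)"

definition approx_differentiable :: "('a::metric_space) measure \<Rightarrow> ('a \<Rightarrow> 'b::metric_space \<Rightarrow> ('a, 'b) germ_rep set set)
    \<Rightarrow> 'a set \<Rightarrow> ('a \<Rightarrow> 'b) \<Rightarrow> 'a \<Rightarrow> bool" where
  "approx_differentiable \<mu> D A f x \<longleftrightarrow> (\<exists>c. approx_differential \<mu> D A f x c)"

definition mu_Lip :: "('a::metric_space) measure \<Rightarrow> 'a set \<Rightarrow> ('a \<Rightarrow> 'b::metric_space) \<Rightarrow> 'a \<Rightarrow> ereal" where
  "mu_Lip \<mu> A f x = mu_limsup \<mu> A (\<lambda>y. dist (f y) (f x) / dist y x) x"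

definition A_f_mu :: "('a::metric_space) measure \<Rightarrow> 'a set \<Rightarrow> ('a \<Rightarrow> 'b::metric_space) \<Rightarrow> 'a set" where
  "A_f_mu \<mu> A f = {x\<in>A. mu_acc \<mu> A x \<and> mu_Lip \<mu> A f x < \<infinity>}"

end

theory Submission
  imports Defs
begin

text \<open>
  The bound \<open>Lip\<^sup>\<mu> f(x) \<le> |[F]|\<close> is the triangle inequality
  \<open>d(f y, f x) \<le> d(f y, F y) + d(F y, F x)\<close>, whose first term is \<open>o(\<rho>(y,x))\<close> in the
  \<open>\<mu>\<close>-topology. For the reverse bound, when \<open>A\<close> is a \<open>\<mu>\<close>-neighbourhood of \<open>x\<close>, the set of
  points \<open>z\<close> where \<open>f\<close> is close to \<open>F\<close> and the difference quotient of \<open>f\<close> is below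
  \<open>M > Lip\<^sup>\<mu> f(x)\<close> has density one at \<open>x\<close>. By the doubling property it therefore meets
  every ball \<open>B(y, \<epsilon> \<rho>(y,x))\<close> with \<open>y\<close> close to \<open>x\<close>, and comparing \<open>F y\<close> with \<open>F z\<close> through
  the Lipschitz bound of \<open>F\<close> gives \<open>d(F y, F x) \<le> (M + O(\<epsilon>)) \<rho>(y,x)\<close>. Two differentials are
  both \<open>\<mu>\<close>-asymptotic to \<open>f\<close> on the \<open>\<mu>\<close>-neighbourhood \<open>A\<close>, hence germ equivalent.
\<close>

lemma ereal_le_by_real_upper_bounds:
  fixes x y :: ereal
  assumes "\<And>M. y < ereal M \<Longrightarrow> x \<le> ereal M"
  shows "x \<le> y"
proof (rule dense_ge)
  fix z assume "y < z"
  then show "x \<le> z" by (cases z) (auto intro: assms)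
qed

lemma dist_ratio_triangle:
  fixes s :: real
  assumes "0 \<le> s"
  shows "dist a c / s \<le> dist a b / s + dist b c / s"
  using assms by (simp add: add_divide_distrib[symmetric] divide_right_mono dist_triangle)

section \<open>Doubling measures\<close>

lemma doubling_mms_sets: "doubling_mms K \<mu> \<Longrightarrow> S \<in> sets borel \<Longrightarrow> S \<in> sets \<mu>"
  by (simp add: doubling_mms_def)

lemma doubling_mms_ball_fmeasurable: "doubling_mms K \<mu> \<Longrightarrow> r > 0 \<Longrightarrow> ball y r \<in> fmeasurable \<mu>"
  by (simp add: doubling_mms_def fmeasurableI)

lemma doubling_mms_measure_ball_pos: "doubling_mms K \<mu> \<Longrightarrow> r > 0 \<Longrightarrow> 0 < measure \<mu> (ball y r)"
  unfolding measure_def doubling_mms_def by (simp add: enn2real_positive_iff)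

lemma doubling_mms_measure_mono:
  assumes dm: "doubling_mms K \<mu>" and "r > 0" "T \<subseteq> ball y r" "S \<subseteq> T"
    and "S \<in> sets borel" "T \<in> sets borel"
  shows "measure \<mu> S \<le> measure \<mu> T"
proof -
  have "T \<in> fmeasurable \<mu>"
    using fmeasurableI2[OF doubling_mms_ball_fmeasurable[OF dm \<open>r > 0\<close>]] assms doubling_mms_sets
    by blast
  then show ?thesis using assms doubling_mms_sets by (blast intro: measure_mono_fmeasurable)
qed

lemma doubling_mms_measure_ball_double:
  assumes dm: "doubling_mms K \<mu>" and "r > 0"
  shows "measure \<mu> (ball y (2 * r)) \<le> K * measure \<mu> (ball y r)"
proof -
  have "K > 0" using dm by (simp add: doubling_mms_def)
  have "emeasure \<mu> (ball y (2 * r)) \<le> ennreal K * emeasure \<mu> (ball y r)"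
    using assms unfolding doubling_mms_def by blast
  moreover have "ennreal K * emeasure \<mu> (ball y r) < top"
    using assms by (simp add: doubling_mms_def ennreal_mult_less_top)
  ultimately have "enn2real (emeasure \<mu> (ball y (2 * r))) \<le> enn2real (ennreal K * emeasure \<mu> (ball y r))"
    by (rule enn2real_mono)
  then show ?thesis unfolding measure_def using \<open>K > 0\<close> by (simp add: enn2real_mult)
qed

lemma doubling_mms_measure_ball_pow:
  assumes dm: "doubling_mms K \<mu>" and "t > 0"
  shows "measure \<mu> (ball y (2 ^ k * t)) \<le> K ^ k * measure \<mu> (ball y t)"
proof (induction k)
  case (Suc k)
  have "K > 0" using dm by (simp add: doubling_mms_def)
  have "measure \<mu> (ball y (2 ^ Suc k * t)) \<le> K * measure \<mu> (ball y (2 ^ k * t))"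
    using doubling_mms_measure_ball_double[OF dm, of "2 ^ k * t" y] \<open>t > 0\<close> by (simp add: mult.assoc)
  also have "\<dots> \<le> K * (K ^ k * measure \<mu> (ball y t))"
    using Suc \<open>K > 0\<close> by (intro mult_left_mono) auto
  finally show ?case by (simp add: mult.assoc)
qed simp

lemma doubling_mms_measure_ball_le_pow:
  assumes dm: "doubling_mms K \<mu>" and "t > 0" and sub: "ball x s \<subseteq> ball y (2 ^ k * t)"
  shows "measure \<mu> (ball x s) \<le> K ^ k * measure \<mu> (ball y t)"
proof -
  have "measure \<mu> (ball x s) \<le> measure \<mu> (ball y (2 ^ k * t))"
    using \<open>t > 0\<close> sub by (intro doubling_mms_measure_mono[OF dm, of "2 ^ k * t" _ y]) auto
  also have "\<dots> \<le> K ^ k * measure \<mu> (ball y t)"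
    using dm \<open>t > 0\<close> by (rule doubling_mms_measure_ball_pow)
  finally show ?thesis .
qed

section \<open>\<mu>-neighbourhoods\<close>

lemma mu_nbhd_ball:
  assumes "d > 0"
  shows "mu_nbhd \<mu> x (ball x d)"
  unfolding mu_nbhd_def
proof (intro conjI exI)
  have "\<forall>\<^sub>F r in at_right 0. measure \<mu> (ball x r - ball x d) / measure \<mu> (ball x r) = 0"
    using eventually_at_right_real[OF \<open>d > 0\<close>]
    by eventually_elim (simp add: Diff_eq_empty_iff[THEN iffD2, OF subset_ball])
  then show "((\<lambda>r. measure \<mu> (ball x r - ball x d) / measure \<mu> (ball x r)) \<longlongrightarrow> 0) (at_right 0)"
    by (rule tendsto_eventually)
qed (use assms in auto)

lemma mu_nbhd_Int:
  assumes dm: "doubling_mms K \<mu>" and U: "mu_nbhd \<mu> x U" and V: "mu_nbhd \<mu> x V"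
  shows "mu_nbhd \<mu> x (U \<inter> V)"
proof -
  obtain B1 where B1: "B1 \<in> sets borel" "B1 \<subseteq> U"
    and lim1: "((\<lambda>r. measure \<mu> (ball x r - B1) / measure \<mu> (ball x r)) \<longlongrightarrow> 0) (at_right 0)"
    using U unfolding mu_nbhd_def by blast
  obtain B2 where B2: "B2 \<in> sets borel" "B2 \<subseteq> V"
    and lim2: "((\<lambda>r. measure \<mu> (ball x r - B2) / measure \<mu> (ball x r)) \<longlongrightarrow> 0) (at_right 0)"
    using V unfolding mu_nbhd_def by blast
  have le: "measure \<mu> (ball x r - B1 \<inter> B2) / measure \<mu> (ball x r)
      \<le> measure \<mu> (ball x r - B1) / measure \<mu> (ball x r) + measure \<mu> (ball x r - B2) / measure \<mu> (ball x r)"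
    for r
  proof -
    have "ball x r - B1 \<in> sets \<mu>" "ball x r - B2 \<in> sets \<mu>"
      using B1(1) B2(1) doubling_mms_sets[OF dm] by auto
    then have "measure \<mu> ((ball x r - B1) \<union> (ball x r - B2))
        \<le> measure \<mu> (ball x r - B1) + measure \<mu> (ball x r - B2)"
      by (rule measure_Un_le)
    moreover have "ball x r - B1 \<inter> B2 = (ball x r - B1) \<union> (ball x r - B2)" by blast
    ultimately show ?thesis by (simp add: add_divide_distrib[symmetric] divide_right_mono)
  qed
  have "((\<lambda>r. measure \<mu> (ball x r - B1 \<inter> B2) / measure \<mu> (ball x r)) \<longlongrightarrow> 0) (at_right 0)"
    by (rule tendsto_sandwich[OF _ _ tendsto_const tendsto_add[OF lim1 lim2, simplified]])
      (auto intro: always_eventually le)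
  moreover have "x \<in> U \<inter> V" using U V unfolding mu_nbhd_def by blast
  ultimately show ?thesis unfolding mu_nbhd_def using B1 B2 by blast
qed

lemma eventually_at_within_mu_nbhd:
  assumes dm: "doubling_mms K \<mu>" and S: "mu_nbhd \<mu> x S" and P: "eventually P (at x within S)"
  obtains U where "mu_nbhd \<mu> x U" "U \<subseteq> S" "\<forall>y\<in>U - {x}. P y"
proof -
  obtain d where "d > 0" and d: "\<forall>y\<in>S. y \<noteq> x \<and> dist y x < d \<longrightarrow> P y"
    using P unfolding eventually_at by blast
  have "mu_nbhd \<mu> x (S \<inter> ball x d)" using mu_nbhd_Int[OF dm S mu_nbhd_ball[OF \<open>d > 0\<close>]] .
  moreover have "\<forall>y\<in>S \<inter> ball x d - {x}. P y" using d by (auto simp: dist_commute)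
  ultimately show ?thesis using that by blast
qed

lemma doubling_mms_ball_meets_dense_set:
  assumes dm: "doubling_mms K \<mu>" and W: "W \<in> sets borel"
    and "dist y x \<le> r" "0 < t" "t \<le> r" and k: "3 * r < 2 ^ k * t"
    and sparse: "measure \<mu> (ball x (2 * r) - W) < measure \<mu> (ball x (2 * r)) / K ^ k"
  shows "\<exists>z\<in>W. dist y z < t"
proof -
  have "K > 0" using dm by (simp add: doubling_mms_def)
  have "measure \<mu> (ball x (2 * r)) / K ^ k \<le> measure \<mu> (ball y t)"
  proof -
    have "dist y z \<le> r + dist x z" for z
      using dist_triangle[of y z x] \<open>dist y x \<le> r\<close> by simp
    with k have "ball x (2 * r) \<subseteq> ball y (2 ^ k * t)"
      by (smt (verit) mem_ball subsetI)
    then show ?thesis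
      using doubling_mms_measure_ball_le_pow[OF dm \<open>t > 0\<close>] \<open>K > 0\<close>
      by (simp add: divide_le_eq mult.commute)
  qed
  moreover have "measure \<mu> (ball y t - W) \<le> measure \<mu> (ball x (2 * r) - W)"
  proof (rule doubling_mms_measure_mono[OF dm, of "2 * r" _ x])
    have "dist x z \<le> r + dist y z" for z
      using dist_triangle[of x z y] \<open>dist y x \<le> r\<close> by (simp add: dist_commute)
    with \<open>t \<le> r\<close> show "ball y t - W \<subseteq> ball x (2 * r) - W"
      by (smt (verit) mem_ball Diff_iff subsetI)
  qed (use \<open>0 < t\<close> \<open>t \<le> r\<close> W in auto)
  ultimately have "ball y t - W \<noteq> ball y t" using sparse by auto
  then show ?thesis by auto
qed

text \<open>
  Density one at \<open>x\<close> propagates, by the doubling property, to every nearby point \<open>y\<close> down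
  to the scale \<open>\<epsilon> \<rho>(y,x)\<close>: a ball \<open>B(y, \<epsilon> r)\<close> with \<open>r = \<rho>(y,x)\<close> missing the Borel kernel
  of the \<open>\<mu>\<close>-neighbourhood would fill the fraction \<open>\<ge> K\<^sup>-\<^sup>k\<close> of \<open>B(x, 2r)\<close>, where \<open>2\<^sup>k \<epsilon> > 3\<close>.
\<close>
lemma doubling_mms_mu_nbhd_meets_small_balls:
  assumes dm: "doubling_mms K \<mu>" and U: "mu_nbhd \<mu> x U" and "e > 0"
  shows "\<forall>\<^sub>F y in at x. \<exists>z\<in>U. dist y z < e * dist y x"
proof -
  define e' where "e' = min e 1"
  have e': "0 < e'" "e' \<le> 1" "e' \<le> e" using \<open>e > 0\<close> by (auto simp: e'_def)
  obtain W where W: "W \<in> sets borel" "W \<subseteq> U"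
    and dens: "((\<lambda>r. measure \<mu> (ball x r - W) / measure \<mu> (ball x r)) \<longlongrightarrow> 0) (at_right 0)"
    using U unfolding mu_nbhd_def by blast
  have "K > 0" using dm by (simp add: doubling_mms_def)
  obtain k :: nat where k: "3 / e' < 2 ^ k" using real_arch_pow[of 2 "3 / e'"] by auto
  have "\<forall>\<^sub>F r in at_right 0. measure \<mu> (ball x r - W) / measure \<mu> (ball x r) < 1 / K ^ k"
    using order_tendstoD(2)[OF dens] \<open>K > 0\<close> by simp
  then obtain b where "b > 0"
    and b: "\<And>s. 0 < s \<Longrightarrow> s < b \<Longrightarrow> measure \<mu> (ball x s - W) / measure \<mu> (ball x s) < 1 / K ^ k"
    unfolding eventually_at_right[OF zero_less_one] by auto
  show ?thesis unfolding eventually_at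
  proof (intro exI[of _ "b / 2"] conjI ballI impI)
    fix y assume y: "y \<noteq> x \<and> dist y x < b / 2"
    define r where "r = dist y x"
    have r: "r > 0" "2 * r < b" using y by (auto simp: r_def)
    have "measure \<mu> (ball x (2 * r) - W) < measure \<mu> (ball x (2 * r)) / K ^ k"
      using b[of "2 * r"] r doubling_mms_measure_ball_pos[OF dm, of "2 * r" x] \<open>K > 0\<close>
      by (simp add: pos_divide_less_eq pos_less_divide_eq mult.commute)
    moreover have "3 * r < 2 ^ k * (e' * r)"
      using k e' r by (simp add: divide_less_eq mult.assoc[symmetric])
    ultimately obtain z where "z \<in> W" "dist y z < e' * r"
      using doubling_mms_ball_meets_dense_set[OF dm W(1), of y x r "e' * r" k] e' r
      by (auto simp: r_def)
    then show "\<exists>z\<in>U. dist y z < e * dist y x"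
      using W(2) e' r by (intro bexI[of _ z]) (auto simp: r_def intro: order.strict_trans2)
  qed (use \<open>b > 0\<close> in simp)
qed

section \<open>\<mu>-limits and germs\<close>

lemma mu_limsup_le_bound_on_mu_nbhd:
  assumes "mu_nbhd \<mu> x U" and "\<And>y. y \<in> U \<inter> A - {x} \<Longrightarrow> g y \<le> z"
  shows "mu_limsup \<mu> A g x \<le> ereal z"
  unfolding mu_limsup_def
  using assms by (intro INF_lower2[of U] SUP_least) auto

lemma mu_limsup_lessE:
  assumes "mu_limsup \<mu> A g x < ereal M"
  obtains U where "mu_nbhd \<mu> x U" "\<And>y. y \<in> U \<inter> A - {x} \<Longrightarrow> g y < M"
proof -
  obtain U where "mu_nbhd \<mu> x U" and "(SUP y\<in>U \<inter> A - {x}. ereal (g y)) < ereal M"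
    using assms unfolding mu_limsup_def INF_less_iff by blast
  then show ?thesis using that SUP_lessD by fastforce
qed

lemma mu_lim_dist_ratio_triangle:
  assumes dm: "doubling_mms K \<mu>"
    and lim_fg: "mu_lim \<mu> S (\<lambda>y. dist (f y) (g y) / dist y x) x 0"
    and lim_gh: "mu_lim \<mu> T (\<lambda>y. dist (g y) (h y) / dist y x) x 0"
    and V: "mu_nbhd \<mu> x V" and sub: "R \<inter> V \<subseteq> S \<inter> T"
  shows "mu_lim \<mu> R (\<lambda>y. dist (f y) (h y) / dist y x) x 0"
  unfolding mu_lim_def
proof (intro allI impI)
  fix e :: real assume "e > 0"
  then obtain U1 U2 where U1: "mu_nbhd \<mu> x U1" "\<forall>y\<in>S \<inter> U1 - {x}. \<bar>dist (f y) (g y) / dist y x - 0\<bar> < e / 2"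
    and U2: "mu_nbhd \<mu> x U2" "\<forall>y\<in>T \<inter> U2 - {x}. \<bar>dist (g y) (h y) / dist y x - 0\<bar> < e / 2"
    using lim_fg lim_gh half_gt_zero unfolding mu_lim_def by blast
  have "mu_nbhd \<mu> x (U1 \<inter> U2 \<inter> V)" using mu_nbhd_Int[OF dm] U1(1) U2(1) V by blast
  moreover have "\<bar>dist (f y) (h y) / dist y x - 0\<bar> < e" if y: "y \<in> R \<inter> (U1 \<inter> U2 \<inter> V) - {x}" for y
  proof -
    have "dist (f y) (g y) / dist y x < e / 2" "dist (g y) (h y) / dist y x < e / 2"
      using y sub U1(2) U2(2) by auto
    then have "dist (f y) (h y) / dist y x < e"
      using dist_ratio_triangle[of "dist y x" "f y" "h y" "g y"] zero_le_dist[of y x] by linarith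
    then show ?thesis by simp
  qed
  ultimately show "\<exists>U. mu_nbhd \<mu> x U \<and> (\<forall>y\<in>R \<inter> U - {x}. \<bar>dist (f y) (h y) / dist y x - 0\<bar> < e)"
    by blast
qed

lemma germ_equiv_sym: "germ_equiv \<mu> x p q \<Longrightarrow> germ_equiv \<mu> x q p"
  unfolding germ_equiv_def by (simp add: dist_commute Int_commute)

lemma germ_equiv_trans:
  assumes dm: "doubling_mms K \<mu>" and q: "lip_rep \<mu> x P q"
    and "germ_equiv \<mu> x p q" "germ_equiv \<mu> x q r"
  shows "germ_equiv \<mu> x p r"
  using assms mu_lim_dist_ratio_triangle[OF dm, where R = "fst p \<inter> fst r" and V = "fst q"]
  unfolding germ_equiv_def lip_rep_def by blast

lemma germ_classes_member:
  assumes dm: "doubling_mms K \<mu>" and c: "c \<in> germ_classes \<mu> x P" and "p \<in> c"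
  shows "lip_rep \<mu> x P p" and "c = {q. lip_rep \<mu> x P q \<and> germ_equiv \<mu> x p q}"
proof -
  obtain p0 where p0: "lip_rep \<mu> x P p0" and c_eq: "c = {q. lip_rep \<mu> x P q \<and> germ_equiv \<mu> x p0 q}"
    using c unfolding germ_classes_def by blast
  show "lip_rep \<mu> x P p" using \<open>p \<in> c\<close> c_eq by blast
  have "germ_equiv \<mu> x p0 p" using \<open>p \<in> c\<close> c_eq by blast
  then show "c = {q. lip_rep \<mu> x P q \<and> germ_equiv \<mu> x p q}"
    unfolding c_eq
    using germ_equiv_trans[OF dm p0] germ_equiv_trans[OF dm \<open>lip_rep \<mu> x P p\<close>] germ_equiv_sym
    by blast
qed

lemma germ_classes_eqI:
  assumes dm: "doubling_mms K \<mu>"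
    and c1: "c1 \<in> germ_classes \<mu> x P" "p1 \<in> c1" and c2: "c2 \<in> germ_classes \<mu> x P" "p2 \<in> c2"
    and "germ_equiv \<mu> x p1 p2"
  shows "c1 = c2"
proof -
  have "lip_rep \<mu> x P p1" "lip_rep \<mu> x P p2"
    using germ_classes_member(1)[OF dm] c1 c2 by blast+
  then have "germ_equiv \<mu> x p1 q \<longleftrightarrow> germ_equiv \<mu> x p2 q" for q
    using germ_equiv_trans[OF dm \<open>lip_rep \<mu> x P p1\<close>, of p2 q]
      germ_equiv_trans[OF dm \<open>lip_rep \<mu> x P p2\<close>, of p1 q]
      germ_equiv_sym \<open>germ_equiv \<mu> x p1 p2\<close> by blast
  then show ?thesis
    using germ_classes_member(2)[OF dm c1] germ_classes_member(2)[OF dm c2] by simp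
qed

lemma approx_differential_rep:
  assumes dm: "doubling_mms K \<mu>" and AD: "approx_distribution \<mu> D"
    and c: "approx_differential \<mu> D A f x c" and "q \<in> c"
  shows "lip_rep \<mu> x (f x) q" and "mu_lim \<mu> (A \<inter> fst q) (\<lambda>y. dist (f y) (snd q y) / dist y x) x 0"
proof -
  have cc: "c \<in> germ_classes \<mu> x (f x)"
    using c AD unfolding approx_differential_def approx_distribution_def by blast
  obtain p where "p \<in> c" and fp: "mu_lim \<mu> (A \<inter> fst p) (\<lambda>y. dist (f y) (snd p y) / dist y x) x 0"
    using c unfolding approx_differential_def by blast
  show "lip_rep \<mu> x (f x) q" using germ_classes_member(1)[OF dm cc \<open>q \<in> c\<close>] .
  have "germ_equiv \<mu> x p q" using germ_classes_member(2)[OF dm cc \<open>p \<in> c\<close>] \<open>q \<in> c\<close> by blast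
  moreover have "mu_nbhd \<mu> x (fst p)"
    using germ_classes_member(1)[OF dm cc \<open>p \<in> c\<close>] unfolding lip_rep_def by blast
  ultimately show "mu_lim \<mu> (A \<inter> fst q) (\<lambda>y. dist (f y) (snd q y) / dist y x) x 0"
    unfolding germ_equiv_def by (intro mu_lim_dist_ratio_triangle[OF dm fp]) auto
qed

lemma approx_differential_some_rep:
  assumes dm: "doubling_mms K \<mu>" and AD: "approx_distribution \<mu> D"
    and c: "approx_differential \<mu> D A f x c"
  defines "q \<equiv> SOME p. p \<in> c"
  shows "lip_rep \<mu> x (f x) q" and "mu_lim \<mu> (A \<inter> fst q) (\<lambda>y. dist (f y) (snd q y) / dist y x) x 0"
proof -
  have "\<exists>p. p \<in> c" using c unfolding approx_differential_def by blast
  then have "q \<in> c" unfolding q_def by (rule someI_ex)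
  then show "lip_rep \<mu> x (f x) q" "mu_lim \<mu> (A \<inter> fst q) (\<lambda>y. dist (f y) (snd q y) / dist y x) x 0"
    using approx_differential_rep[OF dm AD c] by blast+
qed

lemma approx_differential_unique:
  assumes dm: "doubling_mms K \<mu>" and AD: "approx_distribution \<mu> D" and A: "mu_nbhd \<mu> x A"
    and c1: "approx_differential \<mu> D A f x c1" and c2: "approx_differential \<mu> D A f x c2"
  shows "c1 = c2"
proof -
  obtain p1 where "p1 \<in> c1" and fp1: "mu_lim \<mu> (A \<inter> fst p1) (\<lambda>y. dist (f y) (snd p1 y) / dist y x) x 0"
    using c1 unfolding approx_differential_def by blast
  obtain p2 where "p2 \<in> c2" and fp2: "mu_lim \<mu> (A \<inter> fst p2) (\<lambda>y. dist (f y) (snd p2 y) / dist y x) x 0"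
    using c2 unfolding approx_differential_def by blast
  have "mu_lim \<mu> (A \<inter> fst p1) (\<lambda>y. dist (snd p1 y) (f y) / dist y x) x 0"
    using fp1 by (simp add: dist_commute)
  then have "germ_equiv \<mu> x p1 p2"
    unfolding germ_equiv_def by (rule mu_lim_dist_ratio_triangle[OF dm _ fp2 A]) blast
  moreover have "c1 \<in> germ_classes \<mu> x (f x)" "c2 \<in> germ_classes \<mu> x (f x)"
    using c1 c2 AD unfolding approx_differential_def approx_distribution_def by blast+
  ultimately show ?thesis using germ_classes_eqI[OF dm _ \<open>p1 \<in> c1\<close> _ \<open>p2 \<in> c2\<close>] by blast
qed

section \<open>Comparing \<open>Lip\<^sup>\<mu> f(x)\<close> with the norm of a differential\<close>

lemma rep_norm_le_lipschitz:
  assumes q: "lip_rep \<mu> x P q" and L: "L-lipschitz_on (fst q) (snd q)"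
  shows "rep_norm x P q \<le> ereal L"
  unfolding rep_norm_def
proof (rule Limsup_bounded)
  have "x \<in> fst q" "snd q x = P" using q unfolding lip_rep_def mu_nbhd_def by auto
  then have "dist (snd q y) P \<le> L * dist y x" if "y \<in> fst q" for y
    using L that unfolding lipschitz_on_def by blast
  then have "dist (snd q y) P / dist y x \<le> L" if "y \<in> fst q" "y \<noteq> x" for y
    using that by (simp add: pos_divide_le_eq)
  then show "\<forall>\<^sub>F y in at x within fst q. ereal (dist (snd q y) P / dist y x) \<le> ereal L"
    unfolding eventually_at_filter by (auto intro: always_eventually)
qed

lemma mu_Lip_le_rep_norm:
  assumes dm: "doubling_mms K \<mu>" and q: "lip_rep \<mu> x (f x) q"
    and fq: "mu_lim \<mu> (A \<inter> fst q) (\<lambda>y. dist (f y) (snd q y) / dist y x) x 0"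
  shows "mu_Lip \<mu> A f x \<le> rep_norm x (f x) q"
proof (rule ereal_le_by_real_upper_bounds)
  fix M assume "rep_norm x (f x) q < ereal M"
  then obtain M' where M': "rep_norm x (f x) q < ereal M'" "M' < M"
    using ereal_dense2 by force
  have ev: "\<forall>\<^sub>F y in at x within fst q. dist (snd q y) (f x) / dist y x < M'"
    using Limsup_lessD[OF M'(1)[unfolded rep_norm_def]] by simp
  obtain U1 where U1: "mu_nbhd \<mu> x U1" "U1 \<subseteq> fst q"
    and qU1: "\<forall>y\<in>U1 - {x}. dist (snd q y) (f x) / dist y x < M'"
    using eventually_at_within_mu_nbhd[OF dm _ ev] q unfolding lip_rep_def by blast
  obtain U2 where U2: "mu_nbhd \<mu> x U2"
    and fqU2: "\<forall>y\<in>A \<inter> fst q \<inter> U2 - {x}. \<bar>dist (f y) (snd q y) / dist y x - 0\<bar> < M - M'"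
    using fq \<open>M' < M\<close> unfolding mu_lim_def by (meson diff_gt_0_iff_gt)
  show "mu_Lip \<mu> A f x \<le> ereal M"
    unfolding mu_Lip_def
  proof (rule mu_limsup_le_bound_on_mu_nbhd)
    show "mu_nbhd \<mu> x (U1 \<inter> U2)" using mu_nbhd_Int[OF dm U1(1) U2] .
    fix y assume y: "y \<in> U1 \<inter> U2 \<inter> A - {x}"
    then have "dist (f y) (snd q y) / dist y x < M - M'" "dist (snd q y) (f x) / dist y x < M'"
      using fqU2 qU1 U1(2) by auto
    then show "dist (f y) (f x) / dist y x \<le> M"
      using dist_ratio_triangle[of "dist y x" "f y" "f x" "snd q y"] zero_le_dist[of y x] by linarith
  qed
qed

lemma dist_via_lipschitz_near_point:
  assumes F: "L-lipschitz_on S F" and "y \<in> S" "z \<in> S"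
    and yz: "dist y z \<le> e * dist y x" and "0 \<le> e" "0 \<le> M"
    and fF: "dist (f z) (F z) \<le> e * dist z x" and fP: "dist (f z) P \<le> M * dist z x"
  shows "dist (F y) P \<le> (L * e + (M + e) * (1 + e)) * dist y x"
proof -
  have "L \<ge> 0" using F unfolding lipschitz_on_def by simp
  have zx: "dist z x \<le> (1 + e) * dist y x"
    using dist_triangle[of z x y] yz by (simp add: dist_commute algebra_simps)
  have "dist (F y) P \<le> dist (F y) (F z) + dist (F z) (f z) + dist (f z) P"
    by (metis dist_triangle add_left_mono order_trans add.assoc)
  also have "\<dots> \<le> L * (e * dist y x) + (e + M) * dist z x"
  proof -
    have "dist (F y) (F z) \<le> L * dist y z"
      using F \<open>y \<in> S\<close> \<open>z \<in> S\<close> unfolding lipschitz_on_def by blast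
    also have "\<dots> \<le> L * (e * dist y x)" using yz \<open>L \<ge> 0\<close> by (rule mult_left_mono)
    finally show ?thesis using fF fP by (simp add: dist_commute algebra_simps)
  qed
  also have "\<dots> \<le> L * (e * dist y x) + (e + M) * ((1 + e) * dist y x)"
    using zx \<open>0 \<le> e\<close> \<open>0 \<le> M\<close> by (intro add_left_mono mult_left_mono) auto
  also have "\<dots> = (L * e + (M + e) * (1 + e)) * dist y x" by (simp add: algebra_simps)
  finally show ?thesis .
qed

lemma rep_norm_le_approx_bound:
  assumes dm: "doubling_mms K \<mu>" and q: "lip_rep \<mu> x (f x) q"
    and fq: "mu_lim \<mu> (A \<inter> fst q) (\<lambda>y. dist (f y) (snd q y) / dist y x) x 0"
    and L: "L-lipschitz_on (fst q) (snd q)" and M: "mu_Lip \<mu> A f x < ereal M"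
    and "0 < e" "e \<le> 1" and A: "mu_nbhd \<mu> x A"
  shows "rep_norm x (f x) q \<le> ereal (L * e + (M + e) * (1 + e))"
proof -
  obtain U where U: "mu_nbhd \<mu> x U" and fU: "\<And>y. y \<in> U \<inter> A - {x} \<Longrightarrow> dist (f y) (f x) / dist y x < M"
    using M unfolding mu_Lip_def by (rule mu_limsup_lessE) blast
  obtain U' where U': "mu_nbhd \<mu> x U'"
    and fqU': "\<forall>y\<in>A \<inter> fst q \<inter> U' - {x}. \<bar>dist (f y) (snd q y) / dist y x - 0\<bar> < e"
    using fq \<open>0 < e\<close> unfolding mu_lim_def by blast
  define W where "W = U \<inter> A \<inter> fst q \<inter> U'"
  have "mu_nbhd \<mu> x (fst q)" using q unfolding lip_rep_def by blast
  then have "mu_nbhd \<mu> x W" unfolding W_def using mu_nbhd_Int[OF dm] U A U' by blast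
  have bound: "dist (snd q y) (f x) / dist y x \<le> L * e + (M + e) * (1 + e)"
    if "y \<in> fst q" "y \<noteq> x" "z \<in> W" and yz: "dist y z < e * dist y x" for y z
  proof -
    have "e * dist y x \<le> dist y x" using mult_right_mono[OF \<open>e \<le> 1\<close> zero_le_dist[of y x]] by simp
    then have "z \<noteq> x" using yz by auto
    then have "dist z x > 0" by simp
    have "dist (f z) (f x) / dist z x < M" "dist (f z) (snd q z) / dist z x < e"
      using fU fqU' \<open>z \<in> W\<close> \<open>z \<noteq> x\<close> by (auto simp: W_def)
    then have "dist (f z) (f x) \<le> M * dist z x" "dist (f z) (snd q z) \<le> e * dist z x"
      using \<open>dist z x > 0\<close> by (simp_all add: pos_divide_less_eq)
    moreover have "0 \<le> M"
      using order.strict_trans1[OF divide_nonneg_nonneg[OF zero_le_dist zero_le_dist]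
          \<open>dist (f z) (f x) / dist z x < M\<close>] by simp
    moreover have "z \<in> fst q" using \<open>z \<in> W\<close> by (simp add: W_def)
    ultimately have "dist (snd q y) (f x) \<le> (L * e + (M + e) * (1 + e)) * dist y x"
      using dist_via_lipschitz_near_point[OF L \<open>y \<in> fst q\<close>] yz \<open>0 < e\<close> by simp
    then show ?thesis using \<open>y \<noteq> x\<close> by (simp add: pos_divide_le_eq)
  qed
  have "\<forall>\<^sub>F y in at x within fst q. \<exists>z\<in>W. dist y z < e * dist y x"
    using filter_leD[OF at_le[OF subset_UNIV]
        doubling_mms_mu_nbhd_meets_small_balls[OF dm \<open>mu_nbhd \<mu> x W\<close> \<open>0 < e\<close>]] .
  then have "\<forall>\<^sub>F y in at x within fst q. ereal (dist (snd q y) (f x) / dist y x) \<le> ereal (L * e + (M + e) * (1 + e))"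
    unfolding eventually_at_filter by (rule eventually_mono) (metis bound ereal_less_eq(3))
  then show ?thesis unfolding rep_norm_def by (rule Limsup_bounded)
qed

lemma rep_norm_le_mu_Lip:
  assumes dm: "doubling_mms K \<mu>" and q: "lip_rep \<mu> x (f x) q"
    and fq: "mu_lim \<mu> (A \<inter> fst q) (\<lambda>y. dist (f y) (snd q y) / dist y x) x 0"
    and A: "mu_nbhd \<mu> x A"
  shows "rep_norm x (f x) q \<le> mu_Lip \<mu> A f x"
proof (rule ereal_le_by_real_upper_bounds)
  fix M assume M: "mu_Lip \<mu> A f x < ereal M"
  obtain L where L: "L-lipschitz_on (fst q) (snd q)" using q unfolding lip_rep_def by blast
  have lim: "((\<lambda>e. ereal (L * e + (M + e) * (1 + e))) \<longlongrightarrow> ereal (L * 0 + (M + 0) * (1 + 0))) (at_right 0)"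
    by (intro tendsto_intros)
  have "\<forall>\<^sub>F e in at_right 0. rep_norm x (f x) q \<le> ereal (L * e + (M + e) * (1 + e))"
    using eventually_at_right_real[OF zero_less_one]
    by eventually_elim (rule rep_norm_le_approx_bound[OF dm q fq L M _ _ A]; simp)
  from tendsto_lowerbound[OF lim this] show "rep_norm x (f x) q \<le> ereal M" by simp
qed

lemma mu_Lip_le_germ_norm:
  assumes dm: "doubling_mms K \<mu>" and AD: "approx_distribution \<mu> D"
    and c: "approx_differential \<mu> D A f x c"
  shows "mu_Lip \<mu> A f x \<le> germ_norm x (f x) c"
  unfolding germ_norm_def
  using mu_Lip_le_rep_norm[OF dm approx_differential_some_rep[OF dm AD c]] .

lemma germ_norm_le_mu_Lip:
  assumes dm: "doubling_mms K \<mu>" and AD: "approx_distribution \<mu> D" and A: "mu_nbhd \<mu> x A"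
    and c: "approx_differential \<mu> D A f x c"
  shows "germ_norm x (f x) c \<le> mu_Lip \<mu> A f x"
  unfolding germ_norm_def
  using rep_norm_le_mu_Lip[OF dm approx_differential_some_rep[OF dm AD c] A] .

lemma germ_norm_less_infinity:
  assumes dm: "doubling_mms K \<mu>" and AD: "approx_distribution \<mu> D"
    and c: "approx_differential \<mu> D A f x c"
  shows "germ_norm x (f x) c < \<infinity>"
proof -
  let ?q = "SOME p. p \<in> c"
  have q: "lip_rep \<mu> x (f x) ?q" using approx_differential_some_rep(1)[OF dm AD c] .
  then obtain L where "L-lipschitz_on (fst ?q) (snd ?q)" unfolding lip_rep_def by blast
  with q have "germ_norm x (f x) c \<le> ereal L" unfolding germ_norm_def by (rule rep_norm_le_lipschitz)
  then show ?thesis by (rule order.strict_trans1) simp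
qed

theorem proposition2p6:
  fixes K :: real
    and \<mu> :: "'a::polish_space measure"
    and D :: "'a \<Rightarrow> 'b::complete_space \<Rightarrow> ('a, 'b) germ_rep set set"
    and A :: "'a set" and f :: "'a \<Rightarrow> 'b" and x :: 'a
  assumes "doubling_mms K \<mu>"
    and "approx_distribution \<mu> D"
    and "A \<noteq> {}"
    and "x \<in> A"
    and "approx_differentiable \<mu> D A f x"
  shows "x \<in> A_f_mu \<mu> A f
    \<and> (\<forall>c. approx_differential \<mu> D A f x c \<longrightarrow> mu_Lip \<mu> A f x \<le> germ_norm x (f x) c)
    \<and> (mu_nbhd \<mu> x A \<longrightarrow>
         (\<exists>!c. approx_differential \<mu> D A f x c)
         \<and> (\<forall>c. approx_differential \<mu> D A f x c \<longrightarrow> mu_Lip \<mu> A f x = germ_norm x (f x) c))"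
proof -
  note dm = assms(1) and AD = assms(2)
  obtain c0 where c0: "approx_differential \<mu> D A f x c0"
    using assms(5) unfolding approx_differentiable_def by blast
  have "mu_Lip \<mu> A f x < \<infinity>"
    using mu_Lip_le_germ_norm[OF dm AD c0] germ_norm_less_infinity[OF dm AD c0]
    by (rule order.strict_trans1)
  moreover have "mu_acc \<mu> A x" using c0 unfolding approx_differential_def by blast
  ultimately have "x \<in> A_f_mu \<mu> A f" unfolding A_f_mu_def using \<open>x \<in> A\<close> by blast
  moreover have "(\<exists>!c. approx_differential \<mu> D A f x c)
      \<and> (\<forall>c. approx_differential \<mu> D A f x c \<longrightarrow> mu_Lip \<mu> A f x = germ_norm x (f x) c)"
    if A: "mu_nbhd \<mu> x A"
    using c0 approx_differential_unique[OF dm AD A]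
      mu_Lip_le_germ_norm[OF dm AD] germ_norm_le_mu_Lip[OF dm AD A] by (blast intro: order.antisym)
  ultimately show ?thesis using mu_Lip_le_germ_norm[OF dm AD] by blast
qed

end
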